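(* Let $0<q<\infty$ and $\frac{q}{q+1}<p<\infty$, and let $r=\frac{pq}{pq+p-q}$. Then $$\frac{p\sin_{p,q}x}{x}+\frac{r\operatorname{tam}_{p,q}x}{x}>p+r \quad \text{for all } x\in\left(0,\tfrac{\pi_{p,q}}{2}\right),$$ and $$\frac{p\sinh_{p,q}x}{x}+\frac{r\operatorname{tamh}_{p,q}x}{x}>p+r \quad \text{for all } x\in\left(0,\tfrac{\pi_{r,q}}{2}\right).$$
   Context: For $0<q<\infty$ and $\frac{q}{q+1}<p<\infty$: let $F_{p,q}(y)=\int_0^y (1-t^q)^{-1/p}\,dt$ for $y\in[0,1)$ and $\pi_{p,q}=2\int_0^1(1-t^q)^{-1/p}\,dt\in(0,\infty]$ (it equals $\infty$ when $p\le 1$). The function $\sin_{p,q}:[0,\pi_{p,q}/2)\to[0,1)$ is the inverse of $F_{p,q}$, $\cos_{p,q}x=\frac{d}{dx}\sin_{p,q}x$, and $\operatorname{tam}_{p,q}x=\sin_{p,q}x/\cos_{p,q}^{p/q}x$. Let $G_{p,q}(y)=\int_0^y(1+t^q)^{-1/p}\,dt$ for $y\in[0,\infty)$; its range is $[0,\pi_{r,q}/2)$ with $r=\frac{pq}{pq+p-q}$ (which also satisfies $\frac{q}{q+1}<r<\infty$). The function $\sinh_{p,q}:[0,\pi_{r,q}/2)\to[0,\infty)$ is the inverse of $G_{p,q}$, $\cosh_{p,q}x=\frac{d}{dx}\sinh_{p,q}x$, and $\operatorname{tamh}_{p,q}x=\sinh_{p,q}x/\cosh_{p,q}^{p/q}x$.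 *)

theory Defs
  imports "HOL-Analysis.Analysis"
begin

definition F_pq :: "real \<Rightarrow> real \<Rightarrow> real \<Rightarrow> real" where
  "F_pq p q y = integral {0..y} (\<lambda>t. (1 - t powr q) powr (-1/p))"

text \<open>pi_{p,q} as an extended nonnegative real; it is infinite when the improper integral diverges.\<close>
definition pi_pq :: "real \<Rightarrow> real \<Rightarrow> ennreal" where
  "pi_pq p q = 2 * (\<integral>\<^sup>+ t. indicator {0..<1} t * ennreal ((1 - t powr q) powr (-1/p)) \<partial>lborel)"

definition sin_pq :: "real \<Rightarrow> real \<Rightarrow> real \<Rightarrow> real" where
  "sin_pq p q x = (THE y. 0 \<le> y \<and> y < 1 \<and> F_pq p q y = x)"

definition cos_pq :: "real \<Rightarrow> real \<Rightarrow> real \<Rightarrow> real" where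
  "cos_pq p q x = deriv (sin_pq p q) x"

definition tam_pq :: "real \<Rightarrow> real \<Rightarrow> real \<Rightarrow> real" where
  "tam_pq p q x = sin_pq p q x / (cos_pq p q x) powr (p/q)"

definition G_pq :: "real \<Rightarrow> real \<Rightarrow> real \<Rightarrow> real" where
  "G_pq p q y = integral {0..y} (\<lambda>t. (1 + t powr q) powr (-1/p))"

definition sinh_pq :: "real \<Rightarrow> real \<Rightarrow> real \<Rightarrow> real" where
  "sinh_pq p q x = (THE y. 0 \<le> y \<and> G_pq p q y = x)"

definition cosh_pq :: "real \<Rightarrow> real \<Rightarrow> real \<Rightarrow> real" where
  "cosh_pq p q x = deriv (sinh_pq p q) x"

definition tamh_pq :: "real \<Rightarrow> real \<Rightarrow> real \<Rightarrow> real" where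
  "tamh_pq p q x = sinh_pq p q x / (cosh_pq p q x) powr (p/q)"

end

theory Submission
  imports Defs
begin

(* Put y = sin_{p,q} x, so x = F_{p,q} y, cos_{p,q} x = (1 - y^q)^(1/p) and
   tam_{p,q} x = y (1 - y^q)^(-1/q).  The claim becomes
     (p + r) F_{p,q} y < p y + r y (1 - y^q)^(-1/q),
   where both sides vanish at y = 0, so it suffices to compare derivatives:
     (p + r) u^(-1/p) < p + r u^(-1/q - 1)   for u = 1 - y^q,
   which is the strict weighted AM-GM inequality with weights p, r, because
   1/r = 1 + 1/q - 1/p.  The hyperbolic case is identical with u = 1 + t^q.
   Its range condition is handled by the substitution s = t (1 + t^q)^(-1/q),
   which maps G_{p,q} onto F_{r,q}. *)

lemma pqr_exponents:
  fixes p q r :: real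
  assumes q: "0 < q" and p: "q / (q + 1) < p" and r: "r = p * q / (p * q + p - q)"
  shows "0 < p" "0 < r" "1 / r = 1 + 1 / q - 1 / p"
proof -
  have pq: "q < p * (q + 1)" using p q by (simp add: field_simps)
  have "0 < p * (q + 1)" using pq q by linarith
  then show p0: "0 < p" using q by (simp add: zero_less_mult_iff)
  have den: "0 < p * q + p - q" using pq by (simp add: algebra_simps)
  show "0 < r" using r den p0 q by simp
  have "1 / r = (p * q + p - q) / (p * q)" using r by simp
  then show "1 / r = 1 + 1 / q - 1 / p" using p0 q by (simp add: field_simps)
qed

lemma powr_less_tangent_line:
  fixes v w :: real
  assumes w: "0 < w" "w < 1" and v: "0 < v" "v \<noteq> 1"
  shows "v powr w < 1 + w * (v - 1)"
proof -
  define \<phi> where "\<phi> = (\<lambda>z::real. 1 + w * (z - 1) - z powr w)"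
  have \<phi>_deriv: "(\<phi> has_real_derivative w * (1 - z powr (w - 1))) (at z)" if "0 < z" for z
    unfolding \<phi>_def using that
    by (auto intro!: derivative_eq_intros simp: algebra_simps)
  have \<phi>_cont: "continuous_on {a..b} \<phi>" if "0 < a" for a b
    unfolding \<phi>_def using that by (auto intro!: continuous_intros)
  consider "1 < v" | "v < 1" using v by linarith
  then have "\<phi> 1 < \<phi> v"
  proof cases
    case 1
    show ?thesis
    proof (rule DERIV_pos_imp_increasing_open[OF 1 _ \<phi>_cont])
      fix z assume "1 < z" "z < v"
      then have "z powr (w - 1) < 1" using w by (intro powr_less_one) auto
      then show "\<exists>d. (\<phi> has_real_derivative d) (at z) \<and> 0 < d"
        using \<phi>_deriv[of z] \<open>1 < z\<close> w by auto
    qed simp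
  next
    case 2
    show ?thesis
    proof (rule DERIV_neg_imp_decreasing_open[OF 2 _ \<phi>_cont])
      fix z assume z: "v < z" "z < 1"
      then have "z powr (1 - w) < 1" using v w by (simp add: powr01_less_one)
      moreover have "z powr (w - 1) = inverse (z powr (1 - w))" by (simp add: powr_minus[symmetric])
      ultimately have "1 < z powr (w - 1)" using z v by (simp add: one_less_inverse)
      then show "\<exists>d. (\<phi> has_real_derivative d) (at z) \<and> d < 0"
        using \<phi>_deriv[of z] z v w by (auto simp: mult_pos_neg)
    qed (use v in auto)
  qed
  then show ?thesis by (simp add: \<phi>_def)
qed

lemma weighted_amgm_strict:
  fixes a b v :: real
  assumes a: "0 < a" and b: "0 < b" and v: "0 < v" "v \<noteq> 1"
  shows "(a + b) * v powr (b / (a + b)) < a + b * v"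
proof -
  have "v powr (b / (a + b)) < 1 + b / (a + b) * (v - 1)"
    by (rule powr_less_tangent_line) (use a b v in auto)
  then have "(a + b) * v powr (b / (a + b)) < (a + b) * (1 + b / (a + b) * (v - 1))"
    using a b by simp
  also have "\<dots> = a + b * v" using a b by (simp add: field_simps)
  finally show ?thesis .
qed

lemma kernel_amgm_strict:
  fixes p q r u :: real
  assumes q: "0 < q" and p: "q / (q + 1) < p" and r: "r = p * q / (p * q + p - q)"
    and u: "0 < u" "u \<noteq> 1"
  shows "(p + r) * u powr (-1/p) < p + r * u powr (-1/q - 1)"
proof -
  have p0: "0 < p" and r0: "0 < r" and r_inv: "1 / r = 1 + 1 / q - 1 / p"
    using pqr_exponents[OF q p r] by auto
  define v where "v = u powr (-1/q - 1)"
  have "0 < 1 / q" using q by simp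
  then have "-1/q - 1 \<noteq> 0" by linarith
  then have "ln v \<noteq> 0" using u by (simp add: v_def ln_powr)
  then have v: "0 < v" "v \<noteq> 1" using u by (auto simp: v_def)
  have "(p + r) / r = p * (1 / r) + 1" using r0 by (simp add: field_simps)
  also have "\<dots> = p * (q + 1) / q" using r_inv p0 q by (simp add: field_simps)
  finally have "r / (p + r) = q / (p * (q + 1))"
    by (metis inverse_divide)
  moreover have "(-1/q - 1) * (q / (p * (q + 1))) = -1/p"
  proof -
    have "0 < p * q + p * (q * q)" using p0 q by (simp add: add_pos_pos)
    then show ?thesis using p0 q by (simp add: field_simps)
  qed
  ultimately have "(-1/q - 1) * (r / (p + r)) = -1/p" by simp
  then have vw: "v powr (r / (p + r)) = u powr (-1/p)" by (simp add: v_def powr_powr)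
  show ?thesis using weighted_amgm_strict[OF p0 r0 v] unfolding vw by (simp only: v_def)
qed

lemma integral_upper_has_real_derivative:
  fixes g :: "real \<Rightarrow> real"
  assumes g: "continuous_on {0..<B} g" and y: "0 < y" "y < B"
  shows "((\<lambda>y. integral {0..y} g) has_real_derivative g y) (at y)"
proof -
  define b where "b = (y + B) / 2"
  have "continuous_on {0..b} g"
    by (rule continuous_on_subset[OF g]) (use y in \<open>auto simp: b_def\<close>)
  from integral_has_real_derivative[OF this, of y] y show ?thesis
    by (simp add: b_def at_within_Icc_at)
qed

lemma continuous_on_integral_upper:
  fixes g :: "real \<Rightarrow> real"
  assumes g: "continuous_on {0..<B} g"
  shows "continuous_on {0..<B} (\<lambda>y. integral {0..y} g)"
  unfolding continuous_on_eq_continuous_within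
proof
  fix x assume x: "x \<in> {0..<B}"
  define b where "b = (x + B) / 2"
  have "continuous_on {0..b} g"
    by (rule continuous_on_subset[OF g]) (use x in \<open>auto simp: b_def\<close>)
  then have "continuous_on {0..b} (\<lambda>y. integral {0..y} g)"
    by (intro indefinite_integral_continuous_1 integrable_continuous_real)
  then have "continuous (at x within {0..b}) (\<lambda>y. integral {0..y} g)"
    using x by (auto simp: continuous_on_eq_continuous_within b_def)
  moreover have "at x within {0..<B} = at x within {0..b}"
    by (rule at_within_nhd[where S = "{..<b}"]) (use x in \<open>auto simp: b_def\<close>)
  ultimately show "continuous (at x within {0..<B}) (\<lambda>y. integral {0..y} g)" by simp
qed

lemma integral_upper_strict_mono:
  fixes g :: "real \<Rightarrow> real"
  assumes g: "continuous_on {0..<B} g" and pos: "\<And>t. 0 \<le> t \<Longrightarrow> t < B \<Longrightarrow> 0 < g t"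
  shows "strict_mono_on {0..<B} (\<lambda>y. integral {0..y} g)"
proof (rule strict_mono_onI)
  fix a b assume a: "a \<in> {0..<B}" and b: "b \<in> {0..<B}" and ab: "a < b"
  have g_ab: "continuous_on {a..b} g" and g_b: "continuous_on {0..b} g"
    by (rule continuous_on_subset[OF g]; use a b in auto)+
  have "integral {a..b} (\<lambda>_. 0) < integral {a..b} g"
    by (rule integral_less_real) (use g_ab ab a b pos in auto)
  moreover have "integral {0..a} g + integral {a..b} g = integral {0..b} g"
    using Henstock_Kurzweil_Integration.integral_combine[where a=0 and c=a and b=b and f=g] a ab integrable_continuous_real[OF g_b] by auto
  ultimately show "integral {0..a} g < integral {0..b} g" by simp
qed

lemma integral_upper_inverse_has_real_derivative:
  fixes g \<iota> :: "real \<Rightarrow> real"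
  assumes g: "continuous_on {0..<B} g" and pos: "\<And>t. 0 \<le> t \<Longrightarrow> t < B \<Longrightarrow> 0 < g t"
    and y0: "0 < y0" "y0 < B"
    and inv: "\<And>y. 0 \<le> y \<Longrightarrow> y < B \<Longrightarrow> \<iota> (integral {0..y} g) = y"
  shows "(\<iota> has_real_derivative inverse (g y0)) (at (integral {0..y0} g))"
proof -
  define \<Phi> where "\<Phi> = (\<lambda>y. integral {0..y} g)"
  define c where "c = (y0 + B) / 2"
  have c: "y0 < c" "c < B" using y0 by (auto simp: c_def)
  have mono: "strict_mono_on {0..<B} \<Phi>"
    unfolding \<Phi>_def by (rule integral_upper_strict_mono[OF g pos])
  have \<Phi>_deriv: "(\<Phi> has_real_derivative g y) (at y)" if "0 < y" "y < B" for y
    unfolding \<Phi>_def by (rule integral_upper_has_real_derivative[OF g that])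
  have "(\<iota> has_real_derivative inverse (g y0)) (at (\<Phi> y0))"
  proof (rule DERIV_inverse_function[where f = \<Phi> and a = 0 and b = "\<Phi> c"])
    show "(\<Phi> has_real_derivative g y0) (at (\<iota> (\<Phi> y0)))"
      using inv[of y0] y0 \<Phi>_deriv[OF y0] by (simp add: \<Phi>_def)
    show "g y0 \<noteq> 0" using pos[of y0] y0 by simp
    show "0 < \<Phi> y0" "\<Phi> y0 < \<Phi> c"
      using strict_mono_onD[OF mono, of 0 y0] strict_mono_onD[OF mono, of y0 c] y0 c
      by (auto simp: \<Phi>_def)
  next
    fix y assume y: "0 < y" "y < \<Phi> c"
    have "continuous_on {0..c} \<Phi>"
      unfolding \<Phi>_def by (rule continuous_on_subset[OF continuous_on_integral_upper[OF g]]) (use c in auto)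
    then obtain s where "0 \<le> s" "s \<le> c" "\<Phi> s = y"
      using IVT'[of \<Phi> 0 y c] y c y0 by (auto simp: \<Phi>_def)
    then show "\<Phi> (\<iota> y) = y" using inv[of s] c by (simp add: \<Phi>_def)
  next
    show "isCont \<iota> (\<Phi> y0)"
    proof (rule isCont_inverse_function[where f = \<Phi> and x = y0 and d = "min y0 (B - y0) / 2"])
      fix z assume "\<bar>z - y0\<bar> \<le> min y0 (B - y0) / 2"
      then have z: "0 < z" "z < B" using y0 by (auto simp: abs_if split: if_splits)
      show "\<iota> (\<Phi> z) = z" using inv z by (simp add: \<Phi>_def)
      show "isCont \<Phi> z" using \<Phi>_deriv[OF z] by (rule DERIV_isCont)
    qed (use y0 in simp)
  qed
  then show ?thesis by (simp add: \<Phi>_def)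
qed

lemma integral_upper_surj_below_nn_integral:
  fixes g :: "real \<Rightarrow> real"
  assumes g: "continuous_on {0..<1} g" and nonneg: "\<And>t. 0 \<le> t \<Longrightarrow> t < 1 \<Longrightarrow> 0 \<le> g t"
    and meas[measurable]: "g \<in> borel_measurable borel"
    and x: "0 \<le> x" "ennreal x < (\<integral>\<^sup>+ t. indicator {0..<1} t * ennreal (g t) \<partial>lborel)"
  shows "\<exists>y. 0 \<le> y \<and> y < 1 \<and> integral {0..y} g = x"
proof -
  define b where "b = (\<lambda>n::nat. 1 - 1 / (real n + 2))"
  define M where "M = density lborel (\<lambda>t. ennreal (g t))"
  have b: "0 \<le> b n" "b n < 1" for n unfolding b_def by (auto simp: field_simps)
  have g_b: "continuous_on {0..b n} g" for n
    by (rule continuous_on_subset[OF g]) (use b[of n] in auto)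
  have M_b: "emeasure M {0..b n} = ennreal (integral {0..b n} g)" for n
  proof -
    have "emeasure M {0..b n} = (\<integral>\<^sup>+ t. ennreal (g t) * indicator {0..b n} t \<partial>lborel)"
      unfolding M_def by (rule emeasure_density) auto
    also have "\<dots> = ennreal (integral {0..b n} g)"
      by (rule nn_integral_has_integral_lebesgue')
        (use nonneg b[of n] integrable_continuous_real[OF g_b] in auto)
    finally show ?thesis .
  qed
  have union: "(\<Union>n. {0..b n}) = {0..<1}"
  proof (intro equalityI subsetI)
    fix t :: real assume t: "t \<in> {0..<1}"
    obtain n :: nat where "1 / (1 - t) < real n" using reals_Archimedean2 by blast
    then have "1 / (1 - t) \<le> real n + 2" by simp
    then have "1 / (real n + 2) \<le> 1 - t" using t by (auto simp: field_simps)
    then show "t \<in> (\<Union>n. {0..b n})" using t by (intro UN_I[of n]) (auto simp: b_def)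
  qed (auto intro: le_less_trans[OF _ b(2)])
  have "incseq (\<lambda>n. {0..b n})"
    by (rule incseq_SucI) (auto simp: b_def field_simps)
  moreover have "range (\<lambda>n. {0..b n}) \<subseteq> sets M" by (auto simp: M_def)
  ultimately have "(SUP n. emeasure M {0..b n}) = emeasure M {0..<1}"
    using SUP_emeasure_incseq[of "\<lambda>n. {0..b n}" M] by (simp add: union)
  also have "\<dots> = (\<integral>\<^sup>+ t. indicator {0..<1} t * ennreal (g t) \<partial>lborel)"
    unfolding M_def by (subst emeasure_density) (auto simp: mult.commute)
  finally have "ennreal x < (SUP n. emeasure M {0..b n})" using x by simp
  then obtain n where "ennreal x < emeasure M {0..b n}" by (auto simp: less_SUP_iff)
  then have "x < integral {0..b n} g" using M_b x by (simp add: ennreal_less_iff)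
  then obtain y where "0 \<le> y" "y \<le> b n" "integral {0..y} g = x"
    using IVT'[of "\<lambda>y. integral {0..y} g" 0 x "b n"] x b
      indefinite_integral_continuous_1[OF integrable_continuous_real[OF g_b]]
    by auto
  then show ?thesis using b[of n] by (intro exI[of _ y]) auto
qed

lemma kernel_base_pos:
  fixes e q t y :: real
  assumes q: "0 < q" and t: "0 \<le> t" "t \<le> y" and y: "0 < 1 + e * y powr q"
  shows "0 < 1 + e * t powr q"
proof (cases "0 \<le> e")
  case True
  then show ?thesis by (simp add: add_pos_nonneg)
next
  case False
  have "t powr q \<le> y powr q" using t q by (simp add: powr_mono2)
  then have "e * y powr q \<le> e * t powr q" using False by (simp add: mult_left_mono_neg)
  then show ?thesis using y by linarith
qed

lemma continuous_on_kernel: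
  fixes a e q :: real
  assumes q: "0 < q" and S: "S \<subseteq> {0..}" and pos: "\<And>t. t \<in> S \<Longrightarrow> 0 < 1 + e * t powr q"
  shows "continuous_on S (\<lambda>t. (1 + e * t powr q) powr a)"
proof -
  have "continuous_on S (\<lambda>t. t powr q)"
    by (rule continuous_on_powr') (use q S in \<open>auto intro!: continuous_intros\<close>)
  moreover have "\<forall>t\<in>S. 0 \<le> 1 + e * t powr q \<and> (1 + e * t powr q = 0 \<longrightarrow> 0 < a)"
    using pos by (metis less_le)
  ultimately show ?thesis
    by (intro continuous_on_powr') (auto intro!: continuous_intros)
qed

(* tau q (-1) turns sin_{p,q} into tam_{p,q}; its inverse tau q 1 carries
   G_{p,q} onto F_{r,q}. *)
definition tau :: "real \<Rightarrow> real \<Rightarrow> real \<Rightarrow> real" where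
  "tau q e y = y * (1 + e * y powr q) powr (-1/q)"

lemma tau_has_real_derivative:
  fixes q e y :: real
  assumes q: "0 < q" and y: "0 < y" and base: "0 < 1 + e * y powr q"
  shows "(tau q e has_real_derivative (1 + e * y powr q) powr (-1/q - 1)) (at y)"
proof -
  define U where "U = 1 + e * y powr q"
  define X where "X = U powr (-1/q - 1)"
  have U: "0 < U" using base by (simp add: U_def)
  have "((\<lambda>z. z powr (-1/q)) has_real_derivative (-1/q) * X) (at U)"
    using U unfolding X_def by (intro has_real_derivative_powr) simp
  moreover have "((\<lambda>y. 1 + e * y powr q) has_real_derivative e * (q * y powr (q - 1))) (at y)"
    using y by (auto intro!: derivative_eq_intros)
  ultimately have "((\<lambda>y. (1 + e * y powr q) powr (-1/q)) has_real_derivative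
      (-1/q) * X * (e * (q * y powr (q - 1)))) (at y)"
    unfolding U_def by (rule DERIV_chain2)
  from DERIV_mult[OF DERIV_ident this]
  have "(tau q e has_real_derivative U powr (-1/q) - e * X * (y * y powr (q - 1))) (at y)"
    unfolding tau_def U_def using q by (simp add: field_simps)
  moreover have "U powr (-1/q) = U * X"
    using U by (simp add: X_def powr_mult_base)
  moreover have "y * y powr (q - 1) = y powr q"
    using y by (simp add: powr_mult_base)
  ultimately show ?thesis
    by (simp add: X_def U_def algebra_simps)
qed

lemma tau_powr:
  fixes q e y :: real
  assumes q: "0 < q" and y: "0 \<le> y" and base: "0 < 1 + e * y powr q"
  shows "tau q e y powr q = y powr q / (1 + e * y powr q)"
proof -
  have "tau q e y powr q = y powr q * ((1 + e * y powr q) powr (-1/q)) powr q"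
    using y by (simp add: tau_def powr_mult)
  also have "((1 + e * y powr q) powr (-1/q)) powr q = inverse (1 + e * y powr q)"
    using q base by (simp add: powr_powr powr_minus[symmetric] inverse_eq_divide)
  finally show ?thesis by (simp add: divide_inverse)
qed

lemma tau_tau:
  fixes q e y :: real
  assumes q: "0 < q" and y: "0 \<le> y" and base: "0 < 1 + e * y powr q"
  shows "tau q (-e) (tau q e y) = y"
proof -
  define U where "U = 1 + e * y powr q"
  have U: "0 < U" using base by (simp add: U_def)
  have "1 + -e * tau q e y powr q = inverse U"
    using tau_powr[OF q y base] U by (simp add: U_def field_simps)
  then have "(1 + -e * tau q e y powr q) powr (-1/q) = U powr (1/q)"
    using U by (simp add: inverse_powr powr_minus)
  then show ?thesis
    using U by (simp add: tau_def U_def powr_add[symmetric])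
qed

lemma integral_kernel_less:
  fixes p q r e y :: real
  assumes q: "0 < q" and p: "q / (q + 1) < p" and r: "r = p * q / (p * q + p - q)"
    and e: "e \<noteq> 0" and y: "0 < y" and base: "0 < 1 + e * y powr q"
  shows "(p + r) * integral {0..y} (\<lambda>t. (1 + e * t powr q) powr (-1/p)) < p * y + r * tau q e y"
proof -
  define g where "g = (\<lambda>t. (1 + e * t powr q) powr (-1/p))"
  define h where "h = (\<lambda>z. p * z + r * tau q e z - (p + r) * integral {0..z} g)"
  have base_le: "0 < 1 + e * t powr q" if "0 \<le> t" "t \<le> y" for t
    using kernel_base_pos[OF q that base] .
  have "h 0 < h y"
  proof (rule DERIV_pos_imp_increasing_open[OF y])
    fix z assume z: "0 < z" "z < y"
    have g_cont: "continuous_on {0..<y} g"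
      unfolding g_def by (rule continuous_on_kernel[OF q]) (use base_le in auto)
    have "(h has_real_derivative p + r * (1 + e * z powr q) powr (-1/q - 1) - (p + r) * g z) (at z)"
      unfolding h_def
      using tau_has_real_derivative[OF q z(1) base_le] integral_upper_has_real_derivative[OF g_cont z] z
      by (auto intro!: derivative_eq_intros)
    moreover have "(p + r) * g z < p + r * (1 + e * z powr q) powr (-1/q - 1)"
      unfolding g_def by (rule kernel_amgm_strict[OF q p r]) (use z e base_le in auto)
    ultimately show "\<exists>d. (h has_real_derivative d) (at z) \<and> 0 < d" by auto
  next
    have "continuous_on {0..y} g"
      unfolding g_def by (rule continuous_on_kernel[OF q]) (use base_le in auto)
    moreover have "continuous_on {0..y} (\<lambda>t. (1 + e * t powr q) powr (-1/q))"
      by (rule continuous_on_kernel[OF q]) (use base_le in auto)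
    then have "continuous_on {0..y} (\<lambda>z. tau q e z)"
      unfolding tau_def by (intro continuous_on_mult continuous_on_id)
    ultimately show "continuous_on {0..y} h"
      unfolding h_def
      by (intro continuous_intros indefinite_integral_continuous_1 integrable_continuous_real)
  qed
  moreover have "tau q e 0 = 0" by (simp add: tau_def)
  ultimately show ?thesis by (simp add: h_def g_def)
qed

lemma powr_less_one_of_less_one:
  fixes q t :: real
  assumes "0 < q" "0 \<le> t" "t < 1"
  shows "t powr q < 1"
  using assms by (cases "t = 0") (auto simp: powr01_less_one)

lemma div_powr_powr_cancel:
  fixes p q y U :: real
  assumes "0 < p" "0 < U"
  shows "y / (U powr (1/p)) powr (p/q) = y * U powr (-1/q)"
proof -
  have "(U powr (1/p)) powr (p/q) = U powr (1/q)" using assms by (simp add: powr_powr)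
  then show ?thesis by (simp add: powr_minus divide_inverse)
qed

lemma F_kernel_pos:
  fixes a q t :: real
  assumes "0 < q" "0 \<le> t" "t < 1"
  shows "0 < (1 - t powr q) powr a"
  using powr_less_one_of_less_one[OF assms] by simp

lemma continuous_on_F_kernel:
  fixes a q :: real
  assumes q: "0 < q"
  shows "continuous_on {0..<1} (\<lambda>t. (1 - t powr q) powr a)"
proof -
  have "continuous_on {0..<1} (\<lambda>t. (1 + -1 * t powr q) powr a)"
    by (rule continuous_on_kernel[OF q]) (use powr_less_one_of_less_one[OF q] in auto)
  then show ?thesis by simp
qed

lemma F_pq_strict_mono:
  fixes p q :: real
  assumes q: "0 < q"
  shows "strict_mono_on {0..<1} (F_pq p q)"
  unfolding F_pq_def[abs_def]
  by (rule integral_upper_strict_mono[OF continuous_on_F_kernel[OF q] F_kernel_pos[OF q]])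

lemma sin_pq_F_pq:
  fixes p q y :: real
  assumes q: "0 < q" and y: "0 \<le> y" "y < 1"
  shows "sin_pq p q (F_pq p q y) = y"
proof -
  have "sin_pq p q = the_inv_into {0..<1} (F_pq p q)"
    by (auto simp: sin_pq_def the_inv_into_def fun_eq_iff conj_assoc)
  then show ?thesis
    using the_inv_into_f_f[OF strict_mono_on_imp_inj_on[OF F_pq_strict_mono[OF q]]] y by simp
qed

lemma cos_pq_F_pq:
  fixes p q y :: real
  assumes q: "0 < q" and y: "0 < y" "y < 1"
  shows "cos_pq p q (F_pq p q y) = (1 - y powr q) powr (1/p)"
proof -
  have "(sin_pq p q has_real_derivative inverse ((1 - y powr q) powr (-1/p))) (at (F_pq p q y))"
    unfolding F_pq_def
  proof (rule integral_upper_inverse_has_real_derivative[OF continuous_on_F_kernel[OF q] _ y])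
    fix s :: real assume s: "0 \<le> s" "s < 1"
    show "0 < (1 - s powr q) powr (-1/p)" by (rule F_kernel_pos[OF q s])
    show "sin_pq p q (integral {0..s} (\<lambda>t. (1 - t powr q) powr (-1/p))) = s"
      using sin_pq_F_pq[OF q s] unfolding F_pq_def .
  qed
  then show ?thesis by (simp add: cos_pq_def DERIV_imp_deriv powr_minus)
qed

lemma tam_pq_F_pq:
  fixes p q y :: real
  assumes q: "0 < q" and p: "0 < p" and y: "0 < y" "y < 1"
  shows "tam_pq p q (F_pq p q y) = tau q (-1) y"
  using div_powr_powr_cancel[OF p, of "1 - y powr q" y q] powr_less_one_of_less_one[OF q] y
  by (simp add: tam_pq_def sin_pq_F_pq[OF q] cos_pq_F_pq[OF q y] tau_def)

lemma F_pq_surj: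
  fixes p q x :: real
  assumes q: "0 < q" and x: "0 < x" "ennreal x < pi_pq p q / 2"
  shows "\<exists>y. 0 < y \<and> y < 1 \<and> F_pq p q y = x"
proof -
  have pi: "pi_pq p q / 2 = (\<integral>\<^sup>+ t. indicator {0..<1} t * ennreal ((1 - t powr q) powr (-1/p)) \<partial>lborel)"
    unfolding pi_pq_def by (subst mult.commute) (rule ennreal_mult_divide_eq; simp)
  have "\<exists>y. 0 \<le> y \<and> y < 1 \<and> integral {0..y} (\<lambda>t. (1 - t powr q) powr (-1/p)) = x"
  proof (rule integral_upper_surj_below_nn_integral[OF continuous_on_F_kernel[OF q]])
    show "(\<lambda>t. (1 - t powr q) powr (-1/p)) \<in> borel_measurable borel" by measurable
  qed (use F_kernel_pos[OF q] x pi in \<open>auto intro: less_imp_le\<close>)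
  then obtain y where "0 \<le> y" "y < 1" "F_pq p q y = x" by (auto simp: F_pq_def)
  moreover have "y \<noteq> 0" using \<open>F_pq p q y = x\<close> x by (auto simp: F_pq_def)
  ultimately show ?thesis by (intro exI[of _ y]) auto
qed

lemma F_pq_less:
  fixes p q r y :: real
  assumes q: "0 < q" and p: "q / (q + 1) < p" and r: "r = p * q / (p * q + p - q)"
    and y: "0 < y" "y < 1"
  shows "(p + r) * F_pq p q y < p * y + r * tau q (-1) y"
  using integral_kernel_less[OF q p r _ y(1), of "-1"] powr_less_one_of_less_one[OF q] y
  by (simp add: F_pq_def)

lemma continuous_on_G_kernel:
  fixes a q :: real
  assumes q: "0 < q"
  shows "continuous_on {0..} (\<lambda>t. (1 + t powr q) powr a)"
proof -
  have "continuous_on {0..} (\<lambda>t. (1 + 1 * t powr q) powr a)"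
    by (rule continuous_on_kernel[OF q]) (auto simp: add_pos_nonneg)
  then show ?thesis by simp
qed

lemma G_kernel_pos: "0 < (1 + t powr q) powr (a :: real)"
proof -
  have "0 < 1 + t powr q" by (rule add_pos_nonneg) simp_all
  then show ?thesis by simp
qed

lemma G_pq_strict_mono:
  fixes p q :: real
  assumes q: "0 < q"
  shows "strict_mono_on {0..} (G_pq p q)"
proof (rule strict_mono_onI)
  fix a b :: real assume ab: "a \<in> {0..}" "b \<in> {0..}" "a < b"
  have "strict_mono_on {0..<b + 1} (G_pq p q)"
    unfolding G_pq_def[abs_def]
    by (rule integral_upper_strict_mono[OF continuous_on_subset[OF continuous_on_G_kernel[OF q]]
          G_kernel_pos]) auto
  then show "G_pq p q a < G_pq p q b" by (rule strict_mono_onD) (use ab in auto)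
qed

lemma sinh_pq_G_pq:
  fixes p q t :: real
  assumes q: "0 < q" and t: "0 \<le> t"
  shows "sinh_pq p q (G_pq p q t) = t"
proof -
  have "sinh_pq p q = the_inv_into {0..} (G_pq p q)"
    by (auto simp: sinh_pq_def the_inv_into_def fun_eq_iff)
  then show ?thesis
    using the_inv_into_f_f[OF strict_mono_on_imp_inj_on[OF G_pq_strict_mono[OF q]]] t by simp
qed

lemma cosh_pq_G_pq:
  fixes p q t :: real
  assumes q: "0 < q" and t: "0 < t"
  shows "cosh_pq p q (G_pq p q t) = (1 + t powr q) powr (1/p)"
proof -
  have "(sinh_pq p q has_real_derivative inverse ((1 + t powr q) powr (-1/p))) (at (G_pq p q t))"
    unfolding G_pq_def
  proof (rule integral_upper_inverse_has_real_derivative[where B = "t + 1", OF _ _ t])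
    show "continuous_on {0..<t + 1} (\<lambda>t. (1 + t powr q) powr (-1/p))"
      by (rule continuous_on_subset[OF continuous_on_G_kernel[OF q]]) auto
    fix s :: real assume s: "0 \<le> s" "s < t + 1"
    show "0 < (1 + s powr q) powr (-1/p)" by (rule G_kernel_pos)
    show "sinh_pq p q (integral {0..s} (\<lambda>t. (1 + t powr q) powr (-1/p))) = s"
      using sinh_pq_G_pq[OF q s(1)] unfolding G_pq_def .
  qed simp
  then show ?thesis by (simp add: cosh_pq_def DERIV_imp_deriv powr_minus)
qed

lemma tamh_pq_G_pq:
  fixes p q t :: real
  assumes q: "0 < q" and p: "0 < p" and t: "0 < t"
  shows "tamh_pq p q (G_pq p q t) = tau q 1 t"
  using div_powr_powr_cancel[OF p, of "1 + t powr q" t q] t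
  by (simp add: tamh_pq_def sinh_pq_G_pq[OF q] cosh_pq_G_pq[OF q t] tau_def add_pos_nonneg)

lemma tau_one_less_one:
  fixes q t :: real
  assumes q: "0 < q" and t: "0 \<le> t"
  shows "tau q 1 t < 1"
proof (rule ccontr)
  assume "\<not> tau q 1 t < 1"
  then have "1 \<le> tau q 1 t powr q" using q by (simp add: ge_one_powr_ge_zero)
  moreover have "tau q 1 t powr q = t powr q / (1 + t powr q)"
    using tau_powr[OF q t, of 1] by (simp add: add_pos_nonneg)
  ultimately show False by (simp add: add_pos_nonneg)
qed

lemma F_kernel_tau_chain:
  fixes p q r s :: real
  assumes q: "0 < q" and p: "q / (q + 1) < p" and r: "r = p * q / (p * q + p - q)"
    and s: "0 \<le> s"
  shows "(1 - tau q 1 s powr q) powr (-1/r) * (1 + s powr q) powr (-1/q - 1) = (1 + s powr q) powr (-1/p)"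
proof -
  define T where "T = 1 + s powr q"
  have T: "0 < T" by (simp add: T_def add_pos_nonneg)
  have "1 - tau q 1 s powr q = inverse T"
    using tau_powr[OF q s, of 1] T by (simp add: T_def field_simps)
  then have "(1 - tau q 1 s powr q) powr (-1/r) * T powr (-1/q - 1) = T powr (-1/p)"
    using T pqr_exponents(3)[OF q p r]
    by (simp add: inverse_powr powr_minus[symmetric] powr_add[symmetric])
  then show ?thesis by (simp add: T_def)
qed

lemma G_pq_eq_F_pq_tau:
  fixes p q r t :: real
  assumes q: "0 < q" and p: "q / (q + 1) < p" and r: "r = p * q / (p * q + p - q)"
    and t: "0 \<le> t"
  shows "G_pq p q t = F_pq r q (tau q 1 t)"
proof (cases "t = 0")
  case True
  then show ?thesis by (simp add: G_pq_def F_pq_def tau_def)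
next
  case False
  with t have t: "0 < t" by simp
  have tau_range: "tau q 1 s \<in> {0..<1}" if "0 \<le> s" for s
  proof -
    have "0 \<le> tau q 1 s" using that by (simp add: tau_def)
    then show ?thesis using tau_one_less_one[OF q that] by simp
  qed
  define D where "D = (\<lambda>s. G_pq p q s - F_pq r q (tau q 1 s))"
  have "D t = D 0"
  proof (rule DERIV_isconst_end[OF t])
    have "continuous_on {0..t} (\<lambda>s. (1 + s powr q) powr (-1/q))"
      by (rule continuous_on_subset[OF continuous_on_G_kernel[OF q]]) auto
    then have tau_cont: "continuous_on {0..t} (tau q 1)"
      unfolding tau_def by (simp add: continuous_on_mult continuous_on_id)
    have F_cont: "continuous_on {0..<1} (F_pq r q)"
      unfolding F_pq_def[abs_def] by (rule continuous_on_integral_upper[OF continuous_on_F_kernel[OF q]])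
    have G_cont: "continuous_on {0..t} (G_pq p q)"
      unfolding G_pq_def[abs_def]
      by (rule continuous_on_subset[OF continuous_on_integral_upper[where B = "t + 1",
            OF continuous_on_subset[OF continuous_on_G_kernel[OF q]]]]) auto
    have "continuous_on {0..t} (\<lambda>s. F_pq r q (tau q 1 s))"
      by (rule continuous_on_compose2[OF F_cont tau_cont], rule image_subsetI, rule tau_range) simp
    then show "continuous_on {0..t} D"
      unfolding D_def by (rule continuous_on_diff[OF G_cont])
  next
    fix s assume s: "0 < s" "s < t"
    have dG: "(G_pq p q has_real_derivative (1 + s powr q) powr (-1/p)) (at s)"
      unfolding G_pq_def[abs_def]
      by (rule integral_upper_has_real_derivative[where B = t,
            OF continuous_on_subset[OF continuous_on_G_kernel[OF q]] s]) auto
    have dF: "(F_pq r q has_real_derivative (1 - tau q 1 s powr q) powr (-1/r)) (at (tau q 1 s))"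
      unfolding F_pq_def[abs_def]
      by (rule integral_upper_has_real_derivative[OF continuous_on_F_kernel[OF q]])
        (use tau_one_less_one[OF q] s in \<open>auto simp: tau_def intro!: mult_pos_pos G_kernel_pos\<close>)
    have dtau: "(tau q 1 has_real_derivative (1 + s powr q) powr (-1/q - 1)) (at s)"
      using tau_has_real_derivative[OF q s(1), of 1] by (simp add: add_pos_nonneg)
    from DERIV_diff[OF dG DERIV_chain2[OF dF dtau]]
    show "(D has_real_derivative 0) (at s)"
      using F_kernel_tau_chain[OF q p r, of s] s by (simp add: D_def)
  qed
  moreover have "G_pq p q 0 = 0" "F_pq r q (tau q 1 0) = 0"
    by (simp_all add: G_pq_def F_pq_def tau_def)
  ultimately show ?thesis by (simp add: D_def)
qed

lemma G_pq_surj: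
  fixes p q r x :: real
  assumes q: "0 < q" and p: "q / (q + 1) < p" and r: "r = p * q / (p * q + p - q)"
    and x: "0 < x" "ennreal x < pi_pq r q / 2"
  shows "\<exists>t. 0 < t \<and> G_pq p q t = x"
proof -
  obtain s where s: "0 < s" "s < 1" "F_pq r q s = x" using F_pq_surj[OF q x] by blast
  define t where "t = tau q (-1) s"
  have base: "0 < 1 + -1 * s powr q" using powr_less_one_of_less_one[OF q] s by simp
  have "tau q 1 t = s" using tau_tau[OF q _ base] s by (simp add: t_def)
  moreover have "0 < t" unfolding t_def tau_def using s base by (intro mult_pos_pos) auto
  ultimately show ?thesis using G_pq_eq_F_pq_tau[OF q p r, of t] s by auto
qed

lemma G_pq_less:
  fixes p q r t :: real
  assumes q: "0 < q" and p: "q / (q + 1) < p" and r: "r = p * q / (p * q + p - q)"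
    and t: "0 < t"
  shows "(p + r) * G_pq p q t < p * t + r * tau q 1 t"
  using integral_kernel_less[OF q p r _ t, of 1] by (simp add: G_pq_def add_pos_nonneg)

theorem theorem3p3:
  fixes p q r :: real
  assumes "0 < q" and "q / (q + 1) < p"
    and "r = p * q / (p * q + p - q)"
  shows "(\<forall>x. 0 < x \<and> ennreal x < pi_pq p q / 2 \<longrightarrow>
            p * sin_pq p q x / x + r * tam_pq p q x / x > p + r)
       \<and> (\<forall>x. 0 < x \<and> ennreal x < pi_pq r q / 2 \<longrightarrow>
            p * sinh_pq p q x / x + r * tamh_pq p q x / x > p + r)"
proof -
  have p: "0 < p" using pqr_exponents[OF assms] by simp
  have "p * sin_pq p q x / x + r * tam_pq p q x / x > p + r"
    if x: "0 < x" "ennreal x < pi_pq p q / 2" for x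
  proof -
    obtain y where y: "0 < y" "y < 1" "F_pq p q y = x" using F_pq_surj[OF assms(1) x] by blast
    have "sin_pq p q x = y" using sin_pq_F_pq[OF assms(1)] y by auto
    moreover have "tam_pq p q x = tau q (-1) y" using tam_pq_F_pq[OF assms(1) p y(1,2)] y(3) by simp
    moreover have "(p + r) * x < p * y + r * tau q (-1) y" using F_pq_less[OF assms y(1,2)] y(3) by simp
    ultimately show ?thesis using x by (simp add: add_divide_distrib[symmetric] pos_less_divide_eq)
  qed
  moreover have "p * sinh_pq p q x / x + r * tamh_pq p q x / x > p + r"
    if x: "0 < x" "ennreal x < pi_pq r q / 2" for x
  proof -
    obtain t where t: "0 < t" "G_pq p q t = x" using G_pq_surj[OF assms x] by blast
    have "sinh_pq p q x = t" using sinh_pq_G_pq[OF assms(1)] t by auto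
    moreover have "tamh_pq p q x = tau q 1 t" using tamh_pq_G_pq[OF assms(1) p t(1)] t(2) by simp
    moreover have "(p + r) * x < p * t + r * tau q 1 t" using G_pq_less[OF assms t(1)] t(2) by simp
    ultimately show ?thesis using x by (simp add: add_divide_distrib[symmetric] pos_less_divide_eq)
  qed
  ultimately show ?thesis by blast
qed

end
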